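(* Let $S,T\subseteq\mathbb{Z}_{>0}$ be finite with $T\preceq S$, and let $x\in T$ be such that $T\setminus\{x\}\preceq S$. Then $(T\triangleleft S)(i)\ge((T\setminus\{x\})\triangleleft S)(i)$ for all $i\in[|S|]$.
   Context: For a finite set $S\subseteq\mathbb{Z}_{>0}$, $S(i)$ denotes its $i$th smallest element. $T\preceq S$ means $|T|\ge|S|$ and $T(i)<S(i)$ for all $i\in[|S|]$. For finite $S,T$, $T\triangleleft S$ is computed by going through $S$ from largest to smallest; each $s$ picks the largest element of $T$ less than $s$ not yet picked (if one exists); $T\triangleleft S$ is the set of picked elements. *)

theory Defs
  imports Main
begin

definition kth :: "nat set \<Rightarrow> nat \<Rightarrow> nat" where
  "kth S i = sorted_list_of_set S ! (i - 1)"

definition preceq :: "nat set \<Rightarrow> nat set \<Rightarrow> bool" where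
  "preceq T S \<longleftrightarrow> card T \<ge> card S \<and> (\<forall>i\<in>{1..card S}. kth T i < kth S i)"

fun pick :: "nat list \<Rightarrow> nat set \<Rightarrow> nat set" where
  "pick [] A = {}"
| "pick (s # ss) A =
     (if \<exists>t\<in>A. t < s
      then (let t = Max {t\<in>A. t < s} in insert t (pick ss (A - {t})))
      else pick ss A)"

definition tri :: "nat set \<Rightarrow> nat set \<Rightarrow> nat set" where
  "tri T S = pick (rev (sorted_list_of_set S)) T"

end

theory Submission
  imports Defs
begin

text \<open>Removing an element x from the pool of available elements changes the greedy
  picks in a controlled way: either the picked set just loses x, or x is replaced by a
  single smaller element that was not picked before. The dominance T \<preceq> S is a Hall
  condition (every s \<in> S has at least as many elements of T below it as there are
  elements of S up to s) under which greedy picking from the top serves every s, so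
  both picked sets have |S| elements. This rules out losing x without replacement, and
  replacing an element by a smaller one can only lower each order statistic.\<close>

lemma kth_in:
  assumes "finite A" "1 \<le> i" "i \<le> card A"
  shows "kth A i \<in> A"
proof -
  have "i - 1 < length (sorted_list_of_set A)"
    using assms by simp
  then show ?thesis
    using assms(1) nth_mem set_sorted_list_of_set unfolding kth_def by metis
qed

lemma ex_kth_eq:
  assumes "finite A" "a \<in> A"
  obtains i where "1 \<le> i" "i \<le> card A" "kth A i = a"
proof -
  obtain k where "k < card A" "sorted_list_of_set A ! k = a"
    using assms by (metis in_set_conv_nth length_sorted_list_of_set set_sorted_list_of_set)
  then show ?thesis
    using that[of "Suc k"] by (simp add: kth_def)
qed

lemma card_less_kth:
  assumes "finite A" "1 \<le> i" "i \<le> card A"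
  shows "card {a\<in>A. a < kth A i} = i - 1"
proof -
  define xs where "xs = sorted_list_of_set A"
  have xs: "sorted_wrt (<) xs" "set xs = A" "length xs = card A"
    using assms(1) by (simp_all add: xs_def)
  have "{a\<in>A. a < xs ! (i - 1)} = set (take (i - 1) xs)"
  proof (intro set_eqI iffI)
    fix a assume "a \<in> {a\<in>A. a < xs ! (i - 1)}"
    then obtain k where k: "k < length xs" "a = xs ! k" "xs ! k < xs ! (i - 1)"
      using xs(2) by (auto simp: in_set_conv_nth)
    have "k < i - 1"
    proof (rule ccontr)
      assume "\<not> k < i - 1"
      then have "xs ! (i - 1) \<le> xs ! k"
        using sorted_nth_mono[OF strict_sorted_imp_sorted[OF xs(1)]] \<open>k < length xs\<close> by simp
      then show False
        using \<open>xs ! k < xs ! (i - 1)\<close> by simp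
    qed
    then show "a \<in> set (take (i - 1) xs)"
      using k by (auto simp: in_set_conv_nth)
  next
    fix a assume "a \<in> set (take (i - 1) xs)"
    then obtain k where "k < i - 1" "a = xs ! k"
      using assms by (auto simp: in_set_conv_nth xs(3))
    then show "a \<in> {a\<in>A. a < xs ! (i - 1)}"
      using xs assms(2,3) sorted_wrt_nth_less[OF xs(1)] by auto
  qed
  moreover have "distinct xs"
    using xs(1) strict_sorted_iff by blast
  ultimately show ?thesis
    using assms xs(3) by (simp add: kth_def xs_def[symmetric] distinct_card)
qed

lemma card_le_kth:
  assumes "finite A" "1 \<le> i" "i \<le> card A"
  shows "card {a\<in>A. a \<le> kth A i} = i"
proof -
  have "{a\<in>A. a \<le> kth A i} = insert (kth A i) {a\<in>A. a < kth A i}"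
    using kth_in[OF assms] by auto
  then show ?thesis
    using card_less_kth[OF assms] assms by simp
qed

lemma kth_le_iff_card_le:
  assumes "finite A" "1 \<le> i" "i \<le> card A"
  shows "kth A i \<le> v \<longleftrightarrow> i \<le> card {a\<in>A. a \<le> v}"
proof
  assume "kth A i \<le> v"
  then have "{a\<in>A. a \<le> kth A i} \<subseteq> {a\<in>A. a \<le> v}"
    by auto
  then have "card {a\<in>A. a \<le> kth A i} \<le> card {a\<in>A. a \<le> v}"
    using assms(1) by (intro card_mono) auto
  then show "i \<le> card {a\<in>A. a \<le> v}"
    using card_le_kth[OF assms] by simp
next
  assume "i \<le> card {a\<in>A. a \<le> v}"
  show "kth A i \<le> v"
  proof (rule ccontr)
    assume "\<not> kth A i \<le> v"
    then have "{a\<in>A. a \<le> v} \<subseteq> {a\<in>A. a < kth A i}"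
      by auto
    then have "card {a\<in>A. a \<le> v} \<le> card {a\<in>A. a < kth A i}"
      using assms(1) by (intro card_mono) auto
    then have "card {a\<in>A. a \<le> v} \<le> i - 1"
      using card_less_kth[OF assms] by simp
    then show False
      using \<open>i \<le> card {a\<in>A. a \<le> v}\<close> assms(2) by linarith
  qed
qed

lemma kth_image_le:
  assumes "finite A" "inj_on f A" "\<forall>a\<in>A. f a \<le> a" "1 \<le> i" "i \<le> card A"
  shows "kth (f ` A) i \<le> kth A i"
proof -
  have card_fA: "card (f ` A) = card A"
    using assms(2) by (rule card_image)
  have "i \<le> card {a\<in>A. a \<le> kth A i}"
    using card_le_kth[OF assms(1,4,5)] by simp
  also have "\<dots> = card (f ` {a\<in>A. a \<le> kth A i})"
    using assms(2) by (intro card_image[symmetric]) (auto intro: inj_on_subset)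
  also have "\<dots> \<le> card {b\<in>f ` A. b \<le> kth A i}"
    using assms(1,3) by (intro card_mono) (auto intro: order_trans)
  finally show ?thesis
    using kth_le_iff_card_le[of "f ` A" i] assms card_fA by simp
qed

lemma pick_Cons_greatest:
  assumes "t \<in> A" "t < s" "\<forall>u\<in>A. u < s \<longrightarrow> u \<le> t"
  shows "pick (s # ss) A = insert t (pick ss (A - {t}))"
proof -
  have "finite {u\<in>A. u < s}"
    by (rule finite_subset[of _ "{..<s}"]) auto
  then have "Max {u\<in>A. u < s} = t"
    using assms by (intro Max_eqI) auto
  then show ?thesis
    using assms by (auto simp: Let_def)
qed

lemma pick_Cons_cases:
  obtains "\<forall>u\<in>A. \<not> u < s" "pick (s # ss) A = pick ss A"
  | t where "t \<in> A" "t < s" "\<forall>u\<in>A. u < s \<longrightarrow> u \<le> t"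
      "pick (s # ss) A = insert t (pick ss (A - {t}))"
proof (cases "\<exists>u\<in>A. u < s")
  case True
  define t where "t = Max {u\<in>A. u < s}"
  have fin: "finite {u\<in>A. u < s}"
    by (rule finite_subset[of _ "{..<s}"]) auto
  have "t \<in> {u\<in>A. u < s}"
    unfolding t_def using fin True by (intro Max_in) auto
  moreover have "\<forall>u\<in>A. u < s \<longrightarrow> u \<le> t"
    using Max_ge[OF fin] by (auto simp: t_def)
  ultimately show ?thesis
    using that(2) pick_Cons_greatest by blast
qed (use that(1) in auto)

lemma pick_subset: "pick ss A \<subseteq> A"
proof (induction ss arbitrary: A)
  case (Cons s ss)
  show ?case
    by (cases rule: pick_Cons_cases[of A s ss]) (use Cons.IH in auto)+
qed simp

lemma finite_pick: "finite (pick ss A)"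
  by (induction ss arbitrary: A) (simp_all add: Let_def)

definition hall_below :: "nat list \<Rightarrow> nat set \<Rightarrow> bool" where
  "hall_below ss A \<longleftrightarrow> (\<forall>s\<in>set ss. card {u\<in>set ss. u \<le> s} \<le> card {a\<in>A. a < s})"

lemma hall_below_Cons_nonempty:
  assumes "hall_below (s # ss) A"
  shows "\<exists>t\<in>A. t < s"
proof -
  have "0 < card {u\<in>set (s # ss). u \<le> s}"
    by (auto simp: card_gt_0_iff)
  also have "\<dots> \<le> card {a\<in>A. a < s}"
    using assms by (simp add: hall_below_def)
  finally have "{a\<in>A. a < s} \<noteq> {}"
    by (intro notI) simp
  then show ?thesis
    by blast
qed

lemma hall_below_Cons_greatest:
  assumes "sorted_wrt (>) (s # ss)" "hall_below (s # ss) A"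
    and "t \<in> A" "t < s" "\<forall>u\<in>A. u < s \<longrightarrow> u \<le> t"
  shows "hall_below ss (A - {t})"
  unfolding hall_below_def
proof
  fix s' assume "s' \<in> set ss"
  then have "s' < s"
    using assms(1) by simp
  show "card {u\<in>set ss. u \<le> s'} \<le> card {a\<in>A - {t}. a < s'}"
  proof (cases "t < s'")
    case True
    have "card {u\<in>set ss. u \<le> s'} < card {u\<in>set (s # ss). u \<le> s}"
      using \<open>s' < s\<close> assms(1) by (intro psubset_card_mono) auto
    also have "\<dots> \<le> card {a\<in>A. a < s}"
      using assms(2) by (simp add: hall_below_def)
    also have "{a\<in>A. a < s} = insert t {a\<in>A - {t}. a < s'}"
      using assms(3-5) True \<open>s' < s\<close> by fastforce
    finally show ?thesis
      by simp
  next
    case False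
    then have "{a\<in>A - {t}. a < s'} = {a\<in>A. a < s'}"
      by auto
    moreover have "{u\<in>set (s # ss). u \<le> s'} = {u\<in>set ss. u \<le> s'}"
      using \<open>s' < s\<close> by auto
    ultimately show ?thesis
      using assms(2) \<open>s' \<in> set ss\<close> unfolding hall_below_def by (metis list.set_intros(2))
  qed
qed

lemma card_pick:
  assumes "sorted_wrt (>) ss" "hall_below ss A"
  shows "card (pick ss A) = length ss"
  using assms
proof (induction ss arbitrary: A)
  case (Cons s ss)
  obtain t where t: "t \<in> A" "t < s" "\<forall>u\<in>A. u < s \<longrightarrow> u \<le> t"
      and pick_A: "pick (s # ss) A = insert t (pick ss (A - {t}))"
    using hall_below_Cons_nonempty[OF Cons.prems(2)] by (cases rule: pick_Cons_cases[of A s ss]) auto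
  have "hall_below ss (A - {t})"
    using hall_below_Cons_greatest[OF Cons.prems t] .
  then have "card (pick ss (A - {t})) = length ss"
    using Cons.IH Cons.prems(1) by simp
  moreover have "t \<notin> pick ss (A - {t})"
    using pick_subset by blast
  ultimately show ?case
    using pick_A finite_pick by simp
qed simp

lemma card_tri:
  assumes "finite S" "finite T" "preceq T S"
  shows "card (tri T S) = card S"
proof -
  have "card {u\<in>S. u \<le> s} \<le> card {a\<in>T. a < s}" if s: "s \<in> S" for s
  proof -
    obtain j where j: "1 \<le> j" "j \<le> card S" "kth S j = s"
      using ex_kth_eq[OF assms(1) s] by blast
    have "j \<le> card T" "kth T j < kth S j"
      using assms(3) j unfolding preceq_def by auto
    have "card {u\<in>S. u \<le> s} = card {a\<in>T. a \<le> kth T j}"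
      using card_le_kth[OF assms(1) j(1,2)] card_le_kth[OF assms(2) j(1) \<open>j \<le> card T\<close>] j(3)
      by simp
    also have "\<dots> \<le> card {a\<in>T. a < s}"
      using \<open>kth T j < kth S j\<close> j(3) assms(2) by (intro card_mono) auto
    finally show ?thesis .
  qed
  then show ?thesis
    using card_pick[of "rev (sorted_list_of_set S)" T] assms(1)
    by (simp add: tri_def hall_below_def sorted_wrt_rev)
qed

definition removed_or_lowered :: "nat \<Rightarrow> nat set \<Rightarrow> nat set \<Rightarrow> bool" where
  "removed_or_lowered x P Q \<longleftrightarrow>
     Q = P - {x} \<or> (\<exists>y<x. y \<notin> P \<and> x \<in> P \<and> Q = insert y (P - {x}))"

lemma removed_or_lowered_insert:
  assumes "removed_or_lowered x P Q" "t \<noteq> x" "t \<notin> Q"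
  shows "removed_or_lowered x (insert t P) (insert t Q)"
  using assms unfolding removed_or_lowered_def by (elim disjE exE conjE) auto

lemma removed_or_lowered_shift:
  assumes "removed_or_lowered t P Q" "t < x" "x \<notin> P"
  shows "removed_or_lowered x (insert x P) (insert t Q)"
proof -
  consider "Q = P - {t}" | y where "y < t" "y \<notin> P" "t \<in> P" "Q = insert y (P - {t})"
    using assms(1) unfolding removed_or_lowered_def by blast
  then show ?thesis
  proof cases
    case 1
    then show ?thesis
      using assms(2,3) by (cases "t \<in> P") (auto simp: removed_or_lowered_def intro!: exI[of _ t])
  next
    case (2 y)
    then show ?thesis
      using assms(2,3) by (auto simp: removed_or_lowered_def intro!: exI[of _ y])
  qed
qed

lemma kth_le_if_removed_or_lowered:
  assumes "removed_or_lowered x P Q" "finite P" "card Q = card P" "1 \<le> i" "i \<le> card P"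
  shows "kth Q i \<le> kth P i"
proof -
  consider "Q = P - {x}" | y where "y < x" "y \<notin> P" "x \<in> P" "Q = insert y (P - {x})"
    using assms(1) unfolding removed_or_lowered_def by blast
  then show ?thesis
  proof cases
    case 1
    then have "Q = P"
      using assms(2,3) card_Diff1_less[OF assms(2), of x] by (cases "x \<in> P") auto
    then show ?thesis
      by simp
  next
    case (2 y)
    define f where "f a = (if a = x then y else a)" for a
    have "Q = f ` P" "inj_on f P" "\<forall>a\<in>P. f a \<le> a"
      using 2 by (auto simp: f_def inj_on_def)
    then show ?thesis
      using kth_image_le[OF assms(2)] assms(4,5) by simp
  qed
qed

lemma pick_Diff_singleton:
  assumes "x \<in> A"
  shows "removed_or_lowered x (pick ss A) (pick ss (A - {x}))"
  using assms
proof (induction ss arbitrary: A x)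
  case Nil
  then show ?case
    by (simp add: removed_or_lowered_def)
next
  case (Cons s ss)
  show ?case
  proof (cases rule: pick_Cons_cases[of A s ss])
    case 1
    then show ?thesis
      using Cons.IH[OF Cons.prems] by simp
  next
    case (2 t)
    show ?thesis
    proof (cases "t = x")
      case False
      then have "pick (s # ss) (A - {x}) = insert t (pick ss (A - {t} - {x}))"
        using 2 pick_Cons_greatest[of t "A - {x}"] by (simp add: Diff_insert2[symmetric] insert_commute)
      moreover have "t \<notin> pick ss (A - {t} - {x})"
        using pick_subset by blast
      ultimately show ?thesis
        using Cons.IH[of x "A - {t}"] Cons.prems 2(4) False removed_or_lowered_insert by auto
    next
      case True
      define B where "B = A - {x}"
      have pick_A: "pick (s # ss) A = insert x (pick ss B)" and "x \<notin> pick ss B"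
        using 2 True pick_subset[of ss B] by (auto simp: B_def)
      show ?thesis
      proof (cases rule: pick_Cons_cases[of B s ss])
        case 1
        then show ?thesis
          using pick_A \<open>x \<notin> pick ss B\<close> by (simp add: B_def removed_or_lowered_def)
      next
        case (2 t')
        have "t' < x"
          using 2 True \<open>\<forall>u\<in>A. u < s \<longrightarrow> u \<le> t\<close> by (force simp: B_def)
        then show ?thesis
          using Cons.IH[of t' B] 2 pick_A \<open>x \<notin> pick ss B\<close> removed_or_lowered_shift
          by (simp add: B_def)
      qed
    qed
  qed
qed

theorem lemma4p11:
  fixes S T :: "nat set" and x :: nat
  assumes "finite S" and "finite T"
    and "\<forall>s\<in>S. 0 < s" and "\<forall>t\<in>T. 0 < t"
    and "preceq T S"
    and "x \<in> T"
    and "preceq (T - {x}) S"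
  shows "\<forall>i\<in>{1..card S}. kth (tri T S) i \<ge> kth (tri (T - {x}) S) i"
proof -
  have "card (tri T S) = card S" "card (tri (T - {x}) S) = card S"
    using card_tri assms by simp_all
  moreover have "removed_or_lowered x (tri T S) (tri (T - {x}) S)"
    unfolding tri_def using pick_Diff_singleton[OF \<open>x \<in> T\<close>] .
  ultimately show ?thesis
    using kth_le_if_removed_or_lowered[of x "tri T S"] finite_pick by (auto simp: tri_def)
qed

end
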